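(* Let $\alpha,\beta\in\mathbb{R}$ with $\alpha\neq 0$, and let $G_1$ be the connected, simply connected Lie group whose Lie algebra $\mathfrak{g}_1$ has a basis $\{e_1,e_2,e_3\}$ with $[e_1,e_2]=\alpha e_1-\beta e_3$, $[e_1,e_3]=-\alpha e_1-\beta e_2$, $[e_2,e_3]=\beta e_1+\alpha e_2+\alpha e_3$, equipped with the left-invariant Lorentzian metric $g$ for which $\{e_1,e_2,e_3\}$ is pseudo-orthonormal with $e_3$ timelike. Let $\lambda_0, c\in\mathbb{R}$. Then there exists a derivation $D$ of $\mathfrak{g}_1$ with $\mathrm{Ric}=(s\lambda_0+c)\mathrm{Id}+D$ (i.e. $(G_1,g)$ is an algebraic Schouten soliton associated to the Levi-Civita connection) if and only if $\beta=0$ and $c=0$.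
   Context: Pseudo-orthonormal means $g(e_1,e_1)=g(e_2,e_2)=1$, $g(e_3,e_3)=-1$, $g(e_i,e_j)=0$ for $i\neq j$; left-invariant tensors are identified with their values on $\mathfrak{g}$. $\nabla$ is the Levi-Civita connection of $g$, with curvature $R(X,Y)Z=\nabla_X\nabla_YZ-\nabla_Y\nabla_XZ-\nabla_{[X,Y]}Z$. The Ricci tensor is $\rho(X,Y)=-g(R(X,e_1)Y,e_1)-g(R(X,e_2)Y,e_2)+g(R(X,e_3)Y,e_3)$, the Ricci operator $\mathrm{Ric}$ is defined by $\rho(X,Y)=g(\mathrm{Ric}(X),Y)$, and the scalar curvature is $s=\rho(e_1,e_1)+\rho(e_2,e_2)-\rho(e_3,e_3)$. A derivation of $\mathfrak{g}$ is a linear map $D:\mathfrak{g}\to\mathfrak{g}$ with $D[X,Y]=[DX,Y]+[X,DY]$ for all $X,Y\in\mathfrak{g}$. $(G,g)$ is called an algebraic Schouten soliton associated to $\nabla$ (with real constants $\lambda_0$, $c$) if $\mathrm{Ric}=(s\lambda_0+c)\mathrm{Id}+D$ for some derivation $D$. *)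

theory Defs
  imports "HOL-Analysis.Analysis"
begin

text \<open>The Lie algebra g1 is modelled as real^3 with basis e 1, e 2, e 3 (standard axes).\<close>

definition e :: "3 \<Rightarrow> real^3" where
  "e i = axis i 1"

definition lor :: "real^3 \<Rightarrow> real^3 \<Rightarrow> real" where
  "lor x y = x$1 * y$1 + x$2 * y$2 - x$3 * y$3"

definition br :: "real \<Rightarrow> real \<Rightarrow> real^3 \<Rightarrow> real^3 \<Rightarrow> real^3" where
  "br a b x y =
      (x$1 * y$2 - x$2 * y$1) *\<^sub>R (a *\<^sub>R e 1 - b *\<^sub>R e 3)
    + (x$1 * y$3 - x$3 * y$1) *\<^sub>R (- a *\<^sub>R e 1 - b *\<^sub>R e 2)
    + (x$2 * y$3 - x$3 * y$2) *\<^sub>R (b *\<^sub>R e 1 + a *\<^sub>R e 2 + a *\<^sub>R e 3)"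

text \<open>Levi-Civita connection on left-invariant fields: the unique torsion-free
  metric connection (for left-invariant X,Y,Z, X(g(Y,Z)) = 0).\<close>
definition levi_civita :: "real \<Rightarrow> real \<Rightarrow> real^3 \<Rightarrow> real^3 \<Rightarrow> real^3" where
  "levi_civita a b = (THE N. (\<forall>X Y. N X Y - N Y X = br a b X Y) \<and>
                           (\<forall>X Y Z. lor (N X Y) Z + lor Y (N X Z) = 0))"

definition curv :: "real \<Rightarrow> real \<Rightarrow> real^3 \<Rightarrow> real^3 \<Rightarrow> real^3 \<Rightarrow> real^3" where
  "curv a b X Y Z = (let N = levi_civita a b in
      N X (N Y Z) - N Y (N X Z) - N (br a b X Y) Z)"

definition ricci :: "real \<Rightarrow> real \<Rightarrow> real^3 \<Rightarrow> real^3 \<Rightarrow> real" where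
  "ricci a b X Y = - lor (curv a b X (e 1) Y) (e 1) - lor (curv a b X (e 2) Y) (e 2)
                   + lor (curv a b X (e 3) Y) (e 3)"

definition ricci_op :: "real \<Rightarrow> real \<Rightarrow> real^3 \<Rightarrow> real^3" where
  "ricci_op a b X = (THE v. \<forall>Y. lor v Y = ricci a b X Y)"

definition scal :: "real \<Rightarrow> real \<Rightarrow> real" where
  "scal a b = ricci a b (e 1) (e 1) + ricci a b (e 2) (e 2) - ricci a b (e 3) (e 3)"

definition is_derivation :: "real \<Rightarrow> real \<Rightarrow> (real^3 \<Rightarrow> real^3) \<Rightarrow> bool" where
  "is_derivation a b D \<longleftrightarrow> linear D \<and>
     (\<forall>X Y. D (br a b X Y) = br a b (D X) Y + br a b X (D Y))"

end

theory Submission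
  imports Defs
begin

text \<open>The Koszul formula gives the Levi-Civita connection and hence the Ricci operator explicitly;
  the scalar curvature is \<open>-3\<beta>\<^sup>2/2\<close>. If \<open>Ric - k Id\<close> is a derivation, the
  \<open>e\<^sub>2\<close>-component of the derivation identity on \<open>(e\<^sub>1, e\<^sub>2)\<close> forces
  \<open>\<alpha>\<^sup>2\<beta> = 0\<close>. For \<open>\<beta> = 0\<close> the Ricci operator is itself a derivation and
  \<open>s = 0\<close>; since \<open>D\<close> and \<open>D - k Id\<close> can both be derivations only if \<open>k\<close> kills every
  bracket, and \<open>[e\<^sub>1, e\<^sub>2] = \<alpha> e\<^sub>1 \<noteq> 0\<close>, this leaves \<open>c = 0\<close>.\<close>

lemma e_comp [simp]:
  "e 1 $ 1 = 1" "e 1 $ 2 = 0" "e 1 $ 3 = 0"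
  "e 2 $ 1 = 0" "e 2 $ 2 = 1" "e 2 $ 3 = 0"
  "e 3 $ 1 = 0" "e 3 $ 2 = 0" "e 3 $ 3 = 1"
  by (simp_all add: e_def axis_def)

lemma br_comp [simp]:
  "br a b x y $ 1 = a*(x$1*y$2 - x$2*y$1) - a*(x$1*y$3 - x$3*y$1) + b*(x$2*y$3 - x$3*y$2)"
  "br a b x y $ 2 = - b*(x$1*y$3 - x$3*y$1) + a*(x$2*y$3 - x$3*y$2)"
  "br a b x y $ 3 = - b*(x$1*y$2 - x$2*y$1) + a*(x$2*y$3 - x$3*y$2)"
  by (simp_all add: br_def algebra_simps)

lemma lor_eqI:
  assumes "\<And>Z. lor u Z = lor v Z"
  shows "u = v"
proof -
  have "u$1 = v$1" using assms[of "e 1"] by (simp add: lor_def)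
  moreover have "u$2 = v$2" using assms[of "e 2"] by (simp add: lor_def)
  moreover have "u$3 = v$3" using assms[of "e 3"] by (simp add: lor_def)
  ultimately show ?thesis by (simp add: vec_eq_iff forall_3)
qed

lemma lor_commute: "lor u v = lor v u"
  by (simp add: lor_def algebra_simps)

lemma lor_diff_left: "lor (u - v) w = lor u w - lor v w"
  by (simp add: lor_def algebra_simps)

lemma koszul_formula:
  assumes torsion_free: "\<And>X Y. N X Y - N Y X = B X Y"
    and metric: "\<And>X Y Z. lor (N X Y) Z + lor Y (N X Z) = 0"
  shows "lor (N X Y) Z = (lor (B X Y) Z - lor (B Y Z) X + lor (B Z X) Y) / 2"
proof -
  have torsion: "lor (B U V) W = lor (N U V) W - lor (N V U) W" for U V W
    by (metis torsion_free lor_diff_left)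
  have skew: "lor (N U V) W + lor (N U W) V = 0" for U V W
    by (metis metric lor_commute)
  show ?thesis
    using skew[of X Y Z] skew[of Y X Z] skew[of Z X Y]
    unfolding torsion[of X Y] torsion[of Y Z] torsion[of Z X]
    by (simp add: field_simps)
qed

lemma levi_civita_eqI:
  assumes "\<And>X Y. N X Y - N Y X = br a b X Y"
    and "\<And>X Y Z. lor (N X Y) Z + lor Y (N X Z) = 0"
  shows "levi_civita a b = N"
  unfolding levi_civita_def
proof (rule the_equality)
  fix M assume "(\<forall>X Y. M X Y - M Y X = br a b X Y) \<and>
    (\<forall>X Y Z. lor (M X Y) Z + lor Y (M X Z) = 0)"
  then have M_torsion: "\<And>X Y. M X Y - M Y X = br a b X Y"
    and M_metric: "\<And>X Y Z. lor (M X Y) Z + lor Y (M X Z) = 0"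
    by blast+
  show "M = N"
    by (intro ext lor_eqI)
      (simp only: koszul_formula[OF M_torsion M_metric] koszul_formula[OF assms])
qed (use assms in blast)

definition nabla_g1 :: "real \<Rightarrow> real \<Rightarrow> real^3 \<Rightarrow> real^3 \<Rightarrow> real^3" where
  "nabla_g1 a b X Y = vector
    [ a*X$1*Y$2 - a*X$1*Y$3 + b/2*X$2*Y$3 - b/2*X$3*Y$2,
     -a*X$1*Y$1 - b/2*X$1*Y$3 + a*X$2*Y$3 + b/2*X$3*Y$1 - a*X$3*Y$3,
     -a*X$1*Y$1 - b/2*X$1*Y$2 + b/2*X$2*Y$1 + a*X$2*Y$2 - a*X$3*Y$2]"

lemma nabla_g1_comp [simp]:
  "nabla_g1 a b X Y $ 1 = a*X$1*Y$2 - a*X$1*Y$3 + b/2*X$2*Y$3 - b/2*X$3*Y$2"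
  "nabla_g1 a b X Y $ 2 = -a*X$1*Y$1 - b/2*X$1*Y$3 + a*X$2*Y$3 + b/2*X$3*Y$1 - a*X$3*Y$3"
  "nabla_g1 a b X Y $ 3 = -a*X$1*Y$1 - b/2*X$1*Y$2 + b/2*X$2*Y$1 + a*X$2*Y$2 - a*X$3*Y$2"
  by (simp_all add: nabla_g1_def)

lemma levi_civita_g1: "levi_civita a b = nabla_g1 a b"
  by (rule levi_civita_eqI) (simp_all add: vec_eq_iff forall_3 lor_def algebra_simps)

definition Ric_g1 :: "real \<Rightarrow> real \<Rightarrow> real^3 \<Rightarrow> real^3" where
  "Ric_g1 a b X = vector
    [ -(b*b)/2*X$1 - a*b*X$2 + a*b*X$3,
      -a*b*X$1 + (-(b*b)/2 - 2*(a*a))*X$2 + 2*(a*a)*X$3,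
      -a*b*X$1 - 2*(a*a)*X$2 + (2*(a*a) - (b*b)/2)*X$3]"

lemma Ric_g1_comp [simp]:
  "Ric_g1 a b X $ 1 = -(b*b)/2*X$1 - a*b*X$2 + a*b*X$3"
  "Ric_g1 a b X $ 2 = -a*b*X$1 + (-(b*b)/2 - 2*(a*a))*X$2 + 2*(a*a)*X$3"
  "Ric_g1 a b X $ 3 = -a*b*X$1 - 2*(a*a)*X$2 + (2*(a*a) - (b*b)/2)*X$3"
  by (simp_all add: Ric_g1_def)

lemma ricci_g1: "ricci a b X Y = lor (Ric_g1 a b X) Y"
  unfolding ricci_def curv_def Let_def levi_civita_g1
  by (simp add: lor_def algebra_simps)

lemma ricci_op_g1: "ricci_op a b = Ric_g1 a b"
  unfolding ricci_op_def
  by (rule ext, rule the_equality) (auto simp: ricci_g1 intro: lor_eqI)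

lemma scal_g1: "scal a b = - 3/2 * b\<^sup>2"
  unfolding scal_def ricci_g1 by (simp add: lor_def power2_eq_square)

lemma derivation_shift_kills_brackets:
  assumes "is_derivation a b D" and "is_derivation a b (\<lambda>X. D X - k *\<^sub>R X)"
  shows "k *\<^sub>R br a b X Y = 0"
proof -
  have "D (br a b X Y) - k *\<^sub>R br a b X Y
      = br a b (D X - k *\<^sub>R X) Y + br a b X (D Y - k *\<^sub>R Y)"
    using assms(2) unfolding is_derivation_def by blast
  also have "\<dots> = br a b (D X) Y + br a b X (D Y) - 2 * k *\<^sub>R br a b X Y"
    by (simp add: vec_eq_iff forall_3 algebra_simps)
  also have "br a b (D X) Y + br a b X (D Y) = D (br a b X Y)"
    using assms(1) unfolding is_derivation_def by simp
  finally show ?thesis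
    by (auto simp: algebra_simps)
qed

lemma Ric_g1_shift_derivation_imp:
  assumes "is_derivation a b (\<lambda>X. Ric_g1 a b X - k *\<^sub>R X)"
  shows "a * a * b = 0"
proof -
  let ?D = "\<lambda>X. Ric_g1 a b X - k *\<^sub>R X"
  have "?D (br a b (e 1) (e 2)) = br a b (?D (e 1)) (e 2) + br a b (e 1) (?D (e 2))"
    using assms unfolding is_derivation_def by blast
  then have "?D (br a b (e 1) (e 2)) $ 2
      = (br a b (?D (e 1)) (e 2) + br a b (e 1) (?D (e 2))) $ 2"
    by simp
  then show ?thesis
    by (simp add: algebra_simps)
qed

lemma Ric_g1_is_derivation: "is_derivation a 0 (Ric_g1 a 0)"
  unfolding is_derivation_def
proof (intro conjI allI)
  show "linear (Ric_g1 a 0)"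
    by (rule linearI) (simp_all add: vec_eq_iff forall_3 algebra_simps)
qed (simp add: vec_eq_iff forall_3 algebra_simps)

theorem theorem3p2:
  fixes a b lambda0 c :: real
  assumes "a \<noteq> 0"
  shows "(\<exists>D. is_derivation a b D \<and>
            (\<forall>X. ricci_op a b X = (scal a b * lambda0 + c) *\<^sub>R X + D X))
         \<longleftrightarrow> (b = 0 \<and> c = 0)"
proof
  assume "\<exists>D. is_derivation a b D \<and>
            (\<forall>X. ricci_op a b X = (scal a b * lambda0 + c) *\<^sub>R X + D X)"
  then obtain D where der: "is_derivation a b D"
    and ric: "\<And>X. Ric_g1 a b X = (scal a b * lambda0 + c) *\<^sub>R X + D X"
    by (auto simp: ricci_op_g1)
  have D_eq: "D = (\<lambda>X. Ric_g1 a b X - (scal a b * lambda0 + c) *\<^sub>R X)"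
    using ric by (simp add: algebra_simps)
  have "a * a * b = 0"
    using der unfolding D_eq by (rule Ric_g1_shift_derivation_imp)
  with assms have b0: "b = 0" by simp
  have "c *\<^sub>R br a b (e 1) (e 2) = 0"
    using derivation_shift_kills_brackets[OF Ric_g1_is_derivation] der
    unfolding D_eq b0 scal_g1 by simp
  then have "c * a = 0"
    by (simp add: vec_eq_iff forall_3 b0)
  with b0 assms show "b = 0 \<and> c = 0" by simp
next
  assume "b = 0 \<and> c = 0"
  then show "\<exists>D. is_derivation a b D \<and>
            (\<forall>X. ricci_op a b X = (scal a b * lambda0 + c) *\<^sub>R X + D X)"
    using Ric_g1_is_derivation by (auto simp: ricci_op_g1 scal_g1)
qed

end
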